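(* Let ${\bf u}\in\mathcal A^{\mathbb N}$ have its language closed under reversal. If $D({\bf u})>0$, then either there exists a non-palindromic factor $q$ of ${\bf u}$ such that $\Gamma(q)$ contains a cycle, or there exists a palindromic factor $q$ of ${\bf u}$ such that $\Theta(q)$ contains a cycle. Moreover, if the empty word is the unique factor $q$ with this property, then there exists a letter having a non-palindromic complete return word in ${\bf u}$.
   Context: $\widetilde w$ is the reversal of $w$; $w$ is a palindrome if $w=\widetilde w$; the language is closed under reversal if the reversal of every factor is a factor. Palindromic defect: for a finite word $w$ of length $n$, $D(w)=n+1-$(number of distinct palindromic factors of $w$, including the empty word), and $D({\bf u})=\sup D(w)$ over factors of ${\bf u}$. With $E^+(w)=\{b: wb\text{ factor}\}$, $E^-(w)=\{a: aw\text{ factor}\}$, $E(w)=\{(a,b): awb\text{ factor}\}$: $\Gamma(w)$ is the bipartite graph on $(E^-(w)\times\{-1\})\cup(E^+(w)\times\{+1\})$ with edges $\{(a,-1),(b,+1)\}$ for $(a,b)\in E(w)$; for palindromic $w$, $\Theta(w)$ is the graph on $E^+(w)$ with edges $\{a,b\}$ for $(a,b)\in E(w)$, $a\ne b$. If $i<j$ are consecutive occurrences of a factor $w$ in ${\bf u}=u_0u_1\cdots$, the word $u_i\cdots u_{j+|w|-1}$ is a complete return word to $w$. *)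

theory Defs
  imports Main "HOL-Library.Extended_Nat" "HOL-Library.Sublist"
begin

definition occurs_at :: "(nat \<Rightarrow> 'a) \<Rightarrow> 'a list \<Rightarrow> nat \<Rightarrow> bool" where
  "occurs_at u w i \<longleftrightarrow> map u [i..<i + length w] = w"

definition is_factor :: "(nat \<Rightarrow> 'a) \<Rightarrow> 'a list \<Rightarrow> bool" where
  "is_factor u w \<longleftrightarrow> (\<exists>i. occurs_at u w i)"

definition palindrome :: "'a list \<Rightarrow> bool" where
  "palindrome w \<longleftrightarrow> rev w = w"

definition closed_under_reversal :: "(nat \<Rightarrow> 'a) \<Rightarrow> bool" where
  "closed_under_reversal u \<longleftrightarrow> (\<forall>w. is_factor u w \<longrightarrow> is_factor u (rev w))"

definition pal_defect_word :: "'a list \<Rightarrow> nat" where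
  "pal_defect_word w = length w + 1 - card {p. sublist p w \<and> palindrome p}"

definition pal_defect :: "(nat \<Rightarrow> 'a) \<Rightarrow> enat" where
  "pal_defect u = (SUP w \<in> {w. is_factor u w}. enat (pal_defect_word w))"

definition right_ext :: "(nat \<Rightarrow> 'a) \<Rightarrow> 'a list \<Rightarrow> 'a set" where
  "right_ext u w = {b. is_factor u (w @ [b])}"

definition left_ext :: "(nat \<Rightarrow> 'a) \<Rightarrow> 'a list \<Rightarrow> 'a set" where
  "left_ext u w = {a. is_factor u (a # w)}"

definition bi_ext :: "(nat \<Rightarrow> 'a) \<Rightarrow> 'a list \<Rightarrow> ('a \<times> 'a) set" where
  "bi_ext u w = {(a, b). is_factor u (a # w @ [b])}"

(* A simple undirected graph is a pair (vertex set, set of edges), edges being 2-element sets. *)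
type_synonym 'v ugraph = "'v set \<times> 'v set set"

definition has_cycle :: "'v ugraph \<Rightarrow> bool" where
  "has_cycle G \<longleftrightarrow> (\<exists>vs. length vs \<ge> 3 \<and> distinct vs \<and> set vs \<subseteq> fst G \<and>
      (\<forall>i < length vs. {vs ! i, vs ! ((i + 1) mod length vs)} \<in> snd G))"

(* bipartite graph Gamma(w); the sides are tagged by -1 and +1 *)
definition Gamma :: "(nat \<Rightarrow> 'a) \<Rightarrow> 'a list \<Rightarrow> ('a \<times> int) ugraph" where
  "Gamma u w = ((left_ext u w \<times> {-1}) \<union> (right_ext u w \<times> {1}),
                {{(a, -1), (b, 1)} | a b. (a, b) \<in> bi_ext u w})"

definition Theta :: "(nat \<Rightarrow> 'a) \<Rightarrow> 'a list \<Rightarrow> 'a ugraph" where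
  "Theta u w = (right_ext u w, {{a, b} | a b. (a, b) \<in> bi_ext u w \<and> a \<noteq> b})"

definition complete_return_word :: "(nat \<Rightarrow> 'a) \<Rightarrow> 'a list \<Rightarrow> 'a list \<Rightarrow> bool" where
  "complete_return_word u w r \<longleftrightarrow> (\<exists>i j. i < j \<and> occurs_at u w i \<and> occurs_at u w j \<and>
      (\<forall>k. i < k \<and> k < j \<longrightarrow> \<not> occurs_at u w k) \<and> r = map u [i..<j + length w])"

definition cycle_property :: "(nat \<Rightarrow> 'a) \<Rightarrow> 'a list \<Rightarrow> bool" where
  "cycle_property u q \<longleftrightarrow> is_factor u q \<and>
     ((\<not> palindrome q \<and> has_cycle (Gamma u q)) \<or> (palindrome q \<and> has_cycle (Theta u q)))"

end

theory Submission
  imports Defs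
begin

text \<open>If every complete return word of every palindrome were a palindrome, each letter appended to
  a factor would create a new palindrome, its longest palindromic suffix, and \<open>D(u) = 0\<close>. So some
  palindrome \<open>P\<close> has a non-palindromic complete return word \<open>r\<close>. With \<open>l\<close> the first position where
  \<open>r\<close> and its reversal differ, the factors of length \<open>l\<close> read along \<open>r\<close> form a closed walk in the
  reduced Rauzy graph of order \<open>l\<close>; it is a cycle because \<open>P\<close> does not occur inside \<open>r\<close>.
  A cycle of order \<open>m + 1\<close> either only uses edges whose central factor of length \<open>m\<close> is, up to
  reversal, one word \<open>w\<close>, and then it is a cycle of \<open>\<Gamma>(w)\<close> or \<open>\<Theta>(w)\<close>; or some step changes the
  central factor, and then the graph of order \<open>m\<close> has a cycle. There are no cycles of order 0.
  Finally, if all complete return words to letters are palindromes, every new transition between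
  letters in \<open>u\<close> was either seen before or leads to a fresh letter, so \<open>\<Theta>(\<epsilon>)\<close> is a forest.\<close>

section \<open>Cycles in undirected graphs\<close>

lemma rtranclp_imp_distinct_path:
  assumes "R\<^sup>*\<^sup>* a b"
  shows "\<exists>xs. xs \<noteq> [] \<and> hd xs = a \<and> last xs = b \<and> distinct xs \<and> successively R xs"
  using assms
proof (induction rule: converse_rtranclp_induct)
  case base
  show ?case by (intro exI[of _ "[b]"]) auto
next
  case (step a a')
  then obtain xs where xs: "xs \<noteq> []" "hd xs = a'" "last xs = b" "distinct xs" "successively R xs"
    by blast
  show ?case
  proof (cases "a \<in> set xs")
    case True
    then obtain ys zs where "xs = ys @ a # zs" by (meson split_list)
    with xs show ?thesis by (intro exI[of _ "a # zs"]) (auto simp: successively_append_iff)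
  next
    case False
    with xs step(1) show ?thesis
      by (intro exI[of _ "a # xs"]) (cases xs, auto simp: successively_Cons)
  qed
qed

lemma successively_imp_rtranclp:
  "successively R xs \<Longrightarrow> xs \<noteq> [] \<Longrightarrow> R\<^sup>*\<^sup>* (hd xs) (last xs)"
proof (induction xs)
  case (Cons x xs)
  then show ?case
    by (cases xs) (auto simp: successively_Cons intro: converse_rtranclp_into_rtranclp)
qed simp

lemma has_cycle_if_detour:
  assumes E: "\<And>e. e \<in> Ed \<Longrightarrow> e \<subseteq> V"
    and ab: "{a, b} \<in> Ed" "a \<noteq> b"
    and path: "(\<lambda>x y. {x, y} \<in> Ed \<and> {x, y} \<noteq> {a, b})\<^sup>*\<^sup>* a b"
  shows "has_cycle (V, Ed)"
proof -
  obtain xs where xs: "xs \<noteq> []" "hd xs = a" "last xs = b" "distinct xs"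
    and steps: "successively (\<lambda>x y. {x, y} \<in> Ed \<and> {x, y} \<noteq> {a, b}) xs"
    using rtranclp_imp_distinct_path[OF path] by blast
  have len: "length xs \<ge> 3"
  proof (rule ccontr)
    assume "\<not> length xs \<ge> 3"
    with xs(1) consider c where "xs = [c]" | c d where "xs = [c, d]"
      by (cases xs; cases "tl xs"; cases "tl (tl xs)") auto
    then show False using xs steps ab(2) by cases auto
  qed
  have edges: "{xs ! i, xs ! ((i + 1) mod length xs)} \<in> Ed" if i: "i < length xs" for i
  proof (cases "Suc i < length xs")
    case True
    then show ?thesis using successively_nth[OF steps True] by simp
  next
    case False
    then have "Suc i = length xs" using i by simp
    then have "i = length xs - 1" "(i + 1) mod length xs = 0" by simp_all
    then have "xs ! i = b" "xs ! ((i + 1) mod length xs) = a"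
      using xs by (simp_all add: last_conv_nth hd_conv_nth)
    then show ?thesis using ab by (simp add: insert_commute)
  qed
  have "set xs \<subseteq> V"
  proof
    fix x assume "x \<in> set xs"
    then obtain i where "i < length xs" "xs ! i = x" by (auto simp: in_set_conv_nth)
    then show "x \<in> V" using edges E by blast
  qed
  with len xs edges show ?thesis unfolding has_cycle_def by auto
qed

lemma has_cycle_lift:
  assumes inj: "inj_on g V" and E: "\<And>e. e \<in> Ed \<Longrightarrow> e \<subseteq> V"
    and e0: "e0 \<in> Ed" "g ` e0 = {A, B}" "A \<noteq> B"
    and S: "\<And>Z Z'. S Z Z' \<Longrightarrow> \<exists>e\<in>Ed. e \<noteq> e0 \<and> g ` e = {Z, Z'}"
    and path: "S\<^sup>*\<^sup>* A B"
  shows "has_cycle (V, Ed)"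
proof -
  have pair: "e = {v, v'}" if "e \<in> Ed" "v \<in> e" "v' \<in> e" "g ` e = {g v, g v'}" for e v v'
  proof (intro equalityI subsetI)
    fix x assume "x \<in> e"
    then have "g x = g v \<or> g x = g v'" "x \<in> V" "v \<in> V" "v' \<in> V" using that E by auto
    then show "x \<in> {v, v'}" using inj_onD[OF inj] by blast
  qed (use that in auto)
  obtain a b where ab: "a \<in> e0" "b \<in> e0" "g a = A" "g b = B"
    using e0(2) by (metis imageE insertI1 insertI2)
  then have e0_ab: "e0 = {a, b}" using pair e0(1,2) by simp
  let ?R = "\<lambda>x y. {x, y} \<in> Ed \<and> {x, y} \<noteq> {a, b}"
  have "\<exists>v\<in>V. Z = g v \<and> ?R\<^sup>*\<^sup>* a v" if "S\<^sup>*\<^sup>* A Z" for Z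
    using that
  proof (induction rule: rtranclp_induct)
    case base
    show ?case using ab e0(1) E by auto
  next
    case (step Z Z')
    then obtain v where v: "v \<in> V" "Z = g v" "?R\<^sup>*\<^sup>* a v" by blast
    obtain e where e: "e \<in> Ed" "e \<noteq> e0" "g ` e = {Z, Z'}" using S[OF step(2)] by blast
    obtain p v' where pv': "p \<in> e" "g p = Z" "v' \<in> e" "g v' = Z'"
      using e(3) by (metis imageE insertI1 insertI2)
    have "p = v" using inj_onD[OF inj] pv' v E[OF e(1)] by auto
    then have "e = {v, v'}" using pair e pv' v(2) by simp
    then have "?R v v'" using e e0_ab by simp
    then have "?R\<^sup>*\<^sup>* a v'" using v(3) by (rule rtranclp.rtrancl_into_rtrancl[rotated])
    then show ?case using pv' E[OF e(1)] by blast
  qed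
  then obtain v where "v \<in> V" "g v = B" "?R\<^sup>*\<^sup>* a v" using path by blast
  moreover have "v = b" using calculation inj_onD[OF inj] ab E[OF e0(1)] by auto
  ultimately show ?thesis
    using has_cycle_if_detour[OF E] e0 e0_ab ab by auto
qed

lemma has_cycle_insert_leaf:
  assumes "has_cycle (V, insert {a, c} Ed)" "c \<notin> \<Union>Ed" "a \<noteq> c"
  shows "has_cycle (V, Ed)"
proof -
  obtain vs where vs: "length vs \<ge> 3" "distinct vs" "set vs \<subseteq> V"
    "\<forall>i < length vs. {vs ! i, vs ! ((i + 1) mod length vs)} \<in> insert {a, c} Ed"
    using assms(1) unfolding has_cycle_def by auto
  let ?k = "length vs"
  show ?thesis
  proof (cases "c \<in> set vs")
    case False
    have "\<forall>i < ?k. {vs ! i, vs ! ((i + 1) mod ?k)} \<in> Ed"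
    proof (intro allI impI)
      fix i assume i: "i < ?k"
      have "(i + 1) mod ?k < ?k" using vs(1) by (intro mod_less_divisor) linarith
      then have "vs ! i \<noteq> c" "vs ! ((i + 1) mod ?k) \<noteq> c" using False i
        by (metis nth_mem)+
      then have "{vs ! i, vs ! ((i + 1) mod ?k)} \<noteq> {a, c}" by (metis doubleton_eq_iff)
      then show "{vs ! i, vs ! ((i + 1) mod ?k)} \<in> Ed" using vs(4) i by auto
    qed
    then show ?thesis unfolding has_cycle_def using vs by auto
  next
    case True
    \<comment> \<open>Both neighbours of the fresh vertex \<open>c\<close> on the cycle would be \<open>a\<close>.\<close>
    then obtain i where i: "i < ?k" "vs ! i = c" by (auto simp: in_set_conv_nth)
    define p where "p = (if i = 0 then ?k - 1 else i - 1)"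
    define n where "n = (if i = ?k - 1 then 0 else i + 1)"
    have pk: "p < ?k" "n < ?k" using vs(1) i by (auto simp: p_def n_def)
    have pn: "(p + 1) mod ?k = i" using i vs(1) by (auto simp: p_def)
    have nn: "(i + 1) mod ?k = n"
    proof (cases "i = ?k - 1")
      case True
      then have "i + 1 = ?k" using vs(1) by linarith
      then show ?thesis by (simp add: n_def True)
    next
      case False
      then have "i + 1 < ?k" using i by linarith
      then show ?thesis by (simp add: n_def False)
    qed
    have e1: "{vs ! p, c} \<in> insert {a, c} Ed" using vs(4) pk pn i by metis
    have e2: "{c, vs ! n} \<in> insert {a, c} Ed" using vs(4) i nn by metis
    have "{vs ! p, c} = {a, c}" using e1 assms(2) by blast
    moreover have "{c, vs ! n} = {a, c}" using e2 assms(2) by blast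
    moreover have "p \<noteq> i" "n \<noteq> i" using i vs(1) by (auto simp: p_def n_def)
    ultimately have "vs ! p = a" "vs ! n = a"
      using vs(2) pk i by (metis distinct_conv_nth doubleton_eq_iff)+
    then have "p = n" using vs(2) pk by (metis nth_eq_iff_index_eq)
    then show ?thesis using i vs(1) by (auto simp: p_def n_def split: if_splits)
  qed
qed

lemma not_has_cycle_no_edges: "\<not> has_cycle (V, {})"
proof
  assume "has_cycle (V, {})"
  then obtain vs where "length vs \<ge> 3"
    and "\<forall>i < length vs. {vs ! i, vs ! ((i + 1) mod length vs)} \<in> ({} :: 'a set set)"
    unfolding has_cycle_def by auto
  then show False by (metis empty_iff less_le_trans zero_less_numeral)
qed

section \<open>Factors and reversal classes\<close>

lemma is_factor_map_upt: "is_factor u (map u [i..<j])"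
  unfolding is_factor_def occurs_at_def by (cases "i \<le> j") (auto intro!: exI[of _ i])

lemma is_factor_take: "is_factor u w \<Longrightarrow> is_factor u (take k w)"
  unfolding is_factor_def occurs_at_def
proof (elim exE)
  fix i assume h: "map u [i..<i + length w] = w"
  show "\<exists>j. map u [j..<j + length (take k w)] = take k w"
  proof (cases "k \<le> length w")
    case True
    have "take k w = take k (map u [i..<i + length w])" using h by simp
    also have "\<dots> = map u [i..<i+k]" using True by (simp add: take_map)
    finally show ?thesis using True by (intro exI[of _ i]) simp
  next
    case False
    then show ?thesis using h by (intro exI[of _ i]) simp
  qed
qed

lemma is_factor_drop: "is_factor u w \<Longrightarrow> is_factor u (drop k w)"
  unfolding is_factor_def occurs_at_def
proof (elim exE)
  fix i assume h: "map u [i..<i + length w] = w"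
  show "\<exists>j. map u [j..<j + length (drop k w)] = drop k w"
  proof (cases "k \<le> length w")
    case True
    have "drop k w = drop k (map u [i..<i + length w])" using h by simp
    also have "\<dots> = map u [i+k..<i+length w]" using True by (simp add: drop_map)
    finally show ?thesis using True by (intro exI[of _ "i+k"]) simp
  next
    case False
    then show ?thesis by simp
  qed
qed

lemma is_factor_rev: "closed_under_reversal u \<Longrightarrow> is_factor u w \<Longrightarrow> is_factor u (rev w)"
  unfolding closed_under_reversal_def by blast

lemma map_upt_append: "i \<le> j \<Longrightarrow> j \<le> k \<Longrightarrow> map u [i..<j] @ map u [j..<k] = map u [i..<k]"
  using upt_add_eq_append[of i j "k - j"] by simp

lemma take_map_upt: "k \<le> l \<Longrightarrow> take k (map u [i..<i + l]) = map u [i..<i + k]"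
  by (simp add: take_map)

lemma drop_map_upt: "k \<le> l \<Longrightarrow> drop k (map u [i..<i + l]) = map u [i + k..<i + l]"
  by (simp add: drop_map)

lemma sublist_map_upt_imp_occurs_at:
  assumes "sublist p (map u [s..<s + n])"
  obtains k where "s \<le> k" "k + length p \<le> s + n" "occurs_at u p k"
proof -
  obtain ps ss where split: "map u [s..<s + n] = ps @ p @ ss" using assms by (auto simp: sublist_def)
  have len: "length ps + length p \<le> n" using arg_cong[OF split, of length] by simp
  have "p = take (length p) (drop (length ps) (map u [s..<s + n]))" using split by simp
  also have "\<dots> = map u [s + length ps..<s + length ps + length p]"
    using len by (simp add: drop_map take_map)
  finally show ?thesis using len by (intro that[of "s + length ps"]) (auto simp: occurs_at_def)
qed

definition rev_class :: "'a list \<Rightarrow> 'a list set" where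
  "rev_class w = {w, rev w}"

lemma rev_class_rev [simp]: "rev_class (rev w) = rev_class w"
  unfolding rev_class_def by auto

lemma rev_class_eq_iff: "rev_class v = rev_class w \<longleftrightarrow> v = w \<or> v = rev w"
  unfolding rev_class_def by (auto simp: doubleton_eq_iff)

lemma rev_class_Cons_eq_iff: "rev_class (x # w) = rev_class (x' # w) \<longleftrightarrow> x = x'"
  by (cases w rule: rev_cases) (auto simp: rev_class_eq_iff)

lemma rev_class_snoc_eq_iff: "rev_class (w @ [y]) = rev_class (w @ [y']) \<longleftrightarrow> y = y'"
  by (cases w) (auto simp: rev_class_eq_iff)

lemma Cons_eq_snoc_imp_palindrome: "x # w = w @ [y] \<Longrightarrow> palindrome w"
proof -
  assume eq: "x # w = w @ [y]"
  have "w ! k = x" if "k < length w" for k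
    using that
  proof (induction k)
    case 0
    then show ?case using arg_cong[OF eq, of "\<lambda>xs. xs ! 0"] by (simp add: nth_append)
  next
    case (Suc k)
    then show ?case using arg_cong[OF eq, of "\<lambda>xs. xs ! Suc k"] by (simp add: nth_append)
  qed
  then have "w = replicate (length w) x" by (simp add: list_eq_iff_nth_eq)
  then show ?thesis unfolding palindrome_def by (metis rev_replicate)
qed

lemma rev_class_Cons_ne_snoc:
  "\<not> palindrome w \<Longrightarrow> rev_class (x # w) \<noteq> rev_class (w @ [y])"
  using Cons_eq_snoc_imp_palindrome by (fastforce simp: rev_class_eq_iff palindrome_def)

lemma rev_class_snoc_palindrome: "palindrome w \<Longrightarrow> rev_class (w @ [y]) = rev_class (y # w)"
  unfolding rev_class_def palindrome_def by auto

section \<open>Palindromic defect and complete return words\<close>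

definition pal_factors :: "'a list \<Rightarrow> 'a list set" where
  "pal_factors w = {p. sublist p w \<and> palindrome p}"

lemma finite_pal_factors: "finite (pal_factors w)"
  by (rule finite_subset[of _ "set (sublists w)"]) (auto simp: pal_factors_def)

text \<open>By Glen, Justin, Widmer and Zamboni this characterises the rich words, those with \<open>D(u) = 0\<close>;
  only the implication towards \<open>D(u) = 0\<close> is needed here.\<close>

definition palindromic_returns :: "(nat \<Rightarrow> 'a) \<Rightarrow> bool" where
  "palindromic_returns u \<longleftrightarrow>
     (\<forall>P r. palindrome P \<longrightarrow> complete_return_word u P r \<longrightarrow> palindrome r)"

text \<open>The witness is the complete return word of \<open>p\<close> from its last occurrence before \<open>e\<close>.\<close>

lemma longer_pal_suffix:
  assumes H: "palindromic_returns u"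
    and p: "palindrome p" "occurs_at u p k" "occurs_at u p e" "k < e"
  obtains i where "k \<le> i" "i < e" "palindrome (map u [i..<e + length p])"
proof -
  define Oc where "Oc = {t. k \<le> t \<and> t < e \<and> occurs_at u p t}"
  have "finite Oc" "k \<in> Oc" using p unfolding Oc_def by auto
  then have i: "Max Oc \<in> Oc" and max: "\<And>t. t \<in> Oc \<Longrightarrow> t \<le> Max Oc" using Max_in by auto
  have "\<not> occurs_at u p t" if "Max Oc < t" "t < e" for t
  proof
    assume "occurs_at u p t"
    then have "t \<in> Oc" using i that unfolding Oc_def by auto
    then show False using max that by fastforce
  qed
  then have "complete_return_word u p (map u [Max Oc..<e + length p])"
    unfolding complete_return_word_def using i p(3) unfolding Oc_def by blast
  then show ?thesis using i H p(1) that unfolding Oc_def palindromic_returns_def by auto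
qed

text \<open>Appending a letter creates a new palindrome, namely the longest palindromic suffix.\<close>

lemma card_pal_factors_window_Suc:
  assumes H: "palindromic_returns u"
    and "s \<le> e"
  shows "card (pal_factors (map u [s..<e])) < card (pal_factors (map u [s..<Suc e]))"
proof -
  define I where "I = {i. s \<le> i \<and> i \<le> e \<and> palindrome (map u [i..<Suc e])}"
  have "e \<in> I" using assms(2) by (simp add: I_def palindrome_def)
  moreover have "finite I" by (rule finite_subset[of _ "{..e}"]) (auto simp: I_def)
  ultimately have "Min I \<in> I" and min: "\<And>i. i \<in> I \<Longrightarrow> Min I \<le> i" by (auto intro: Min_in)
  then have i0: "s \<le> Min I" "Min I \<le> e" "palindrome (map u [Min I..<Suc e])"
    by (auto simp: I_def simp del: upt_Suc)
  define p where "p = map u [Min I..<Suc e]"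
  have occ: "occurs_at u p (Min I)" and len: "Min I + length p = Suc e"
    using i0 by (auto simp: p_def occurs_at_def simp del: upt_Suc)
  have "p \<notin> pal_factors (map u [s..<e])"
  proof
    assume "p \<in> pal_factors (map u [s..<e])"
    then obtain k where k: "s \<le> k" "k + length p \<le> e" "occurs_at u p k"
      using assms(2) sublist_map_upt_imp_occurs_at[where s = s and n = "e - s"] by (auto simp: pal_factors_def)
    have "k < Min I" using k(2) len by simp
    then obtain i where "k \<le> i" "i < Min I" "palindrome (map u [i..<Min I + length p])"
      using longer_pal_suffix[OF H _ k(3) occ] i0(3) unfolding p_def by blast
    then have "i \<in> I" using k(1) len i0(2) unfolding I_def by (auto simp del: upt_Suc)
    then show False using min \<open>i < Min I\<close> by fastforce
  qed
  moreover have "sublist p (map u [s..<Suc e])"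
    using map_upt_append[of s "Min I" "Suc e" u] i0 unfolding p_def by (metis sublist_append_leftI le_SucI)
  then have "p \<in> pal_factors (map u [s..<Suc e])" using i0(3) by (simp add: pal_factors_def p_def)
  moreover have "sublist (map u [s..<e]) (map u [s..<Suc e])"
    using assms(2) by simp
  then have "pal_factors (map u [s..<e]) \<subseteq> pal_factors (map u [s..<Suc e])"
    unfolding pal_factors_def by (auto intro: sublist_order.order.trans)
  ultimately show ?thesis by (intro psubset_card_mono finite_pal_factors) (auto simp del: upt_Suc)
qed

lemma card_pal_factors_window:
  assumes "palindromic_returns u"
  shows "n + 1 \<le> card (pal_factors (map u [s..<s + n]))"
proof (induction n)
  case 0
  have "pal_factors (map u [s..<s + 0]) = {[]}" unfolding pal_factors_def palindrome_def by auto
  then show ?case by simp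
next
  case (Suc n)
  then show ?case using card_pal_factors_window_Suc[OF assms, where s = s and e = "s + n"] by (simp del: upt_Suc)
qed

lemma pal_defect_pos_imp_nonpal_return_word:
  assumes "pal_defect u > 0"
  obtains P r where "palindrome P" "complete_return_word u P r" "\<not> palindrome r"
proof (rule ccontr)
  assume "\<not> thesis"
  then have H: "palindromic_returns u" using that unfolding palindromic_returns_def by blast
  have "pal_defect_word w = 0" if w: "is_factor u w" for w
  proof -
    obtain s where "map u [s..<s + length w] = w" using w by (auto simp: is_factor_def occurs_at_def)
    then show ?thesis using card_pal_factors_window[OF H, where n = "length w" and s = s]
      unfolding pal_defect_word_def pal_factors_def by simp
  qed
  then have "pal_defect u \<le> 0" unfolding pal_defect_def by (intro SUP_least) (simp add: zero_enat_def)
  then show False using assms by simp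
qed

section \<open>Reduced Rauzy graphs\<close>

text \<open>The reduced Rauzy graph of order \<open>m\<close> has the reversal classes of factors of length \<open>m\<close> as
  vertices and those of length \<open>m + 1\<close> as edges, an edge joining the classes of its prefix and
  suffix of length \<open>m\<close>; \<open>rauzy_adj u m E\<close> is its adjacency with the edge \<open>E\<close> removed. It has a
  cycle iff some edge can be removed without disconnecting its ends.\<close>

definition rauzy_ends :: "nat \<Rightarrow> 'a list set \<Rightarrow> 'a list set set" where
  "rauzy_ends m X = (\<lambda>x. rev_class (take m x)) ` X"

definition rauzy_adj :: "(nat \<Rightarrow> 'a) \<Rightarrow> nat \<Rightarrow> 'a list set \<Rightarrow> 'a list set \<Rightarrow> 'a list set \<Rightarrow> bool" where
  "rauzy_adj u m E X Y \<longleftrightarrow> (\<exists>f. is_factor u f \<and> length f = Suc m \<and> rev_class f \<noteq> E \<and> X \<noteq> Y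
      \<and> rauzy_ends m (rev_class f) = {X, Y})"

definition rauzy_cycle :: "(nat \<Rightarrow> 'a) \<Rightarrow> nat \<Rightarrow> bool" where
  "rauzy_cycle u m \<longleftrightarrow> (\<exists>e X Y. is_factor u e \<and> length e = Suc m \<and> X \<noteq> Y
      \<and> rauzy_ends m (rev_class e) = {X, Y} \<and> (rauzy_adj u m (rev_class e))\<^sup>*\<^sup>* X Y)"

text \<open>Adjacency of order \<open>m + 1\<close> through edges whose central factor of length \<open>m\<close> lies in \<open>W\<close>:
  for \<open>W\<close> the class of \<open>w\<close> these edges form a copy of \<open>\<Gamma>(w)\<close>, or of \<open>\<Theta>(w)\<close> if \<open>w\<close> is a palindrome.\<close>

definition rauzy_adj_through ::
    "(nat \<Rightarrow> 'a) \<Rightarrow> nat \<Rightarrow> 'a list set \<Rightarrow> 'a list set \<Rightarrow> 'a list set \<Rightarrow> 'a list set \<Rightarrow> bool" where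
  "rauzy_adj_through u m E W X Y \<longleftrightarrow> (\<exists>f. is_factor u f \<and> length f = Suc (Suc m)
      \<and> rev_class f \<noteq> E \<and> X \<noteq> Y \<and> rauzy_ends (Suc m) (rev_class f) = {X, Y}
      \<and> rev_class (take m (drop 1 f)) = W)"

lemma rauzy_ends_rev_class:
  "length x = Suc m \<Longrightarrow> rauzy_ends m (rev_class x) = {rev_class (take m x), rev_class (drop 1 x)}"
  unfolding rauzy_ends_def rev_class_def by (auto simp: take_rev)

lemma rauzy_ends_Cons_snoc:
  "length w = m \<Longrightarrow> rauzy_ends (Suc m) (rev_class (x # w @ [y])) = {rev_class (x # w), rev_class (w @ [y])}"
  by (subst rauzy_ends_rev_class) auto

lemma rauzy_adj_rtranclp_edge:
  assumes "is_factor u f" "length f = Suc m" "rev_class f \<noteq> E"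
  shows "(rauzy_adj u m E)\<^sup>*\<^sup>* (rev_class (take m f)) (rev_class (drop 1 f))"
  using assms rauzy_ends_rev_class[OF assms(2)] unfolding rauzy_adj_def
  by (cases "rev_class (take m f) = rev_class (drop 1 f)") (auto intro!: r_into_rtranclp)

lemma rauzy_walk_windows:
  assumes "s \<le> s'" "\<And>t. s \<le> t \<Longrightarrow> t < s' \<Longrightarrow> rev_class (map u [t..<t + Suc l]) \<noteq> E"
  shows "(rauzy_adj u l E)\<^sup>*\<^sup>* (rev_class (map u [s..<s + l])) (rev_class (map u [s'..<s' + l]))"
  using assms
proof (induction s' rule: dec_induct)
  case base
  show ?case by simp
next
  case (step t)
  let ?f = "map u [t..<t + Suc l]"
  have "take l ?f = map u [t..<t + l]" "drop 1 ?f = map u [Suc t..<Suc t + l]"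
    using take_map_upt[of l "Suc l" u t] drop_map_upt[of 1 "Suc l" u t] by simp_all
  then have "(rauzy_adj u l E)\<^sup>*\<^sup>* (rev_class (map u [t..<t + l])) (rev_class (map u [Suc t..<Suc t + l]))"
    using rauzy_adj_rtranclp_edge[OF is_factor_map_upt, of u t "t + Suc l" l E] step by (simp del: upt_Suc)
  then show ?case using step by (auto intro: rtranclp_trans)
qed

lemma rauzy_cycle_of_closed_walk:
  assumes "0 < k"
    and first: "rev_class (map u [Suc s..<Suc s + l]) \<noteq> rev_class (map u [s..<s + l])"
    and closed: "rev_class (map u [s + k..<s + k + l]) = rev_class (map u [s..<s + l])"
    and avoid: "\<And>t. s < t \<Longrightarrow> t < s + k
                 \<Longrightarrow> rev_class (map u [t..<t + Suc l]) \<noteq> rev_class (map u [s..<s + Suc l])"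
  shows "rauzy_cycle u l"
proof -
  let ?e = "map u [s..<s + Suc l]"
  have "(rauzy_adj u l (rev_class ?e))\<^sup>*\<^sup>* (rev_class (map u [Suc s..<Suc s + l]))
          (rev_class (map u [s + k..<s + k + l]))"
    using assms by (intro rauzy_walk_windows) auto
  then have path: "(rauzy_adj u l (rev_class ?e))\<^sup>*\<^sup>* (rev_class (map u [Suc s..<Suc s + l]))
          (rev_class (map u [s..<s + l]))"
    using closed by simp
  have "take l ?e = map u [s..<s + l]" "drop 1 ?e = map u [Suc s..<Suc s + l]"
    using take_map_upt[of l "Suc l" u s] drop_map_upt[of 1 "Suc l" u s] by simp_all
  then have "rauzy_ends l (rev_class ?e)
      = {rev_class (map u [Suc s..<Suc s + l]), rev_class (map u [s..<s + l])}"
    using rauzy_ends_rev_class[of ?e l] by (auto simp del: upt_Suc)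
  moreover have "is_factor u ?e" "length ?e = Suc l" by (rule is_factor_map_upt) simp
  ultimately show ?thesis unfolding rauzy_cycle_def using first path by blast
qed

lemma not_rauzy_cycle_0: "\<not> rauzy_cycle u 0"
  unfolding rauzy_cycle_def by (auto simp: rauzy_ends_rev_class doubleton_eq_iff)

section \<open>A cycle from a non-palindromic complete return word of a palindrome\<close>

lemma not_palindrome_first_mismatch:
  assumes "\<not> palindrome r"
  obtains l where "2 * l + 2 \<le> length r" "r ! l \<noteq> r ! (length r - 1 - l)"
    "\<And>t. t < l \<Longrightarrow> r ! t = r ! (length r - 1 - t)"
proof -
  let ?n = "length r"
  define M where "M = {k. k < ?n \<and> r ! k \<noteq> r ! (?n - 1 - k)}"
  have "M \<noteq> {}"
  proof
    assume "M = {}"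
    have "rev r = r"
    proof (rule nth_equalityI)
      fix k assume "k < length (rev r)"
      moreover have "k \<notin> M" using \<open>M = {}\<close> by simp
      ultimately have "r ! k = r ! (?n - 1 - k)" unfolding M_def by simp
      with \<open>k < length (rev r)\<close>
      show "rev r ! k = r ! k" by (simp add: rev_nth)
    qed simp
    then show False using assms by (simp add: palindrome_def)
  qed
  define l where "l = (LEAST k. k \<in> M)"
  have l: "l < ?n" "r ! l \<noteq> r ! (?n - 1 - l)"
    using LeastI_ex[of "\<lambda>k. k \<in> M"] \<open>M \<noteq> {}\<close> unfolding l_def M_def by auto
  have below: "r ! t = r ! (?n - 1 - t)" if "t < l" for t
  proof -
    have "t \<notin> M" using that unfolding l_def by (rule not_less_Least)
    then show ?thesis using that l(1) unfolding M_def by simp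
  qed
  have "r ! (?n - 1 - l) \<noteq> r ! (?n - 1 - (?n - 1 - l))" using l by simp
  then have "\<not> ?n - 1 - l < l" using below by metis
  moreover have "l \<noteq> ?n - 1 - l" using l(2) by metis
  ultimately have "2 * l + 2 \<le> ?n" using l(1) by linarith
  then show ?thesis using that l(2) below by blast
qed

lemma palindrome_border_mirror:
  assumes "palindrome P" "prefix P r" "suffix P r" "t < length P"
  shows "r ! t = r ! (length r - 1 - t)"
proof -
  obtain xs where r: "r = xs @ P" using assms(3) by (auto simp: suffix_def)
  obtain ys where r': "r = P @ ys" using assms(2) by (auto simp: prefix_def)
  have "length r - 1 - t = length xs + (length P - 1 - t)" using r assms(4) by simp
  then have "r ! (length r - 1 - t) = P ! (length P - 1 - t)" using r by (simp add: nth_append_length_plus)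
  also have "\<dots> = P ! t" using assms(1,4) rev_nth[of t P] by (simp add: palindrome_def)
  also have "\<dots> = r ! t" using assms(4) r' by (simp add: nth_append)
  finally show ?thesis by simp
qed

text \<open>Equal windows give an occurrence of \<open>P\<close> at \<open>i + t\<close>, reversed ones an occurrence at
  \<open>i + t + (l - length P)\<close>.\<close>

lemma rev_class_window_ne:
  assumes P: "palindrome P" "occurs_at u P i" "length P \<le> l" "0 < t"
    and no_occ: "\<And>k. i < k \<Longrightarrow> k \<le> i + t + (l - length P) \<Longrightarrow> \<not> occurs_at u P k"
  shows "rev_class (map u [i + t..<i + t + l]) \<noteq> rev_class (map u [i..<i + l])"
proof
  let ?p = "length P"
  assume "rev_class (map u [i + t..<i + t + l]) = rev_class (map u [i..<i + l])"
  then consider "map u [i + t..<i + t + l] = map u [i..<i + l]"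
    | "map u [i + t..<i + t + l] = rev (map u [i..<i + l])"
    by (auto simp: rev_class_eq_iff)
  then show False
  proof cases
    case 1
    then have "take ?p (map u [i + t..<i + t + l]) = P" using P(2,3) by (simp add: occurs_at_def take_map)
    then have "occurs_at u P (i + t)" using P(3) by (simp add: occurs_at_def take_map)
    then show False using no_occ P(4) by simp
  next
    case 2
    have "drop (l - ?p) (rev (map u [i..<i + l])) = rev P"
      using P(2,3) by (simp add: drop_rev occurs_at_def take_map)
    then have "drop (l - ?p) (map u [i + t..<i + t + l]) = P" using 2 P(1) by (simp add: palindrome_def)
    then have "occurs_at u P (i + t + (l - ?p))" using P(3) by (simp add: occurs_at_def drop_map)
    then show False using no_occ P(4) by simp
  qed
qed

lemma map_upt_mirror:
  assumes "l \<le> n" "\<And>t. t < l \<Longrightarrow> u (i + t) = u (i + (n - 1 - t))"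
  shows "map u [i + (n - l)..<i + (n - l) + l] = rev (map u [i..<i + l])"
proof (rule nth_equalityI)
  fix t assume "t < length (map u [i + (n - l)..<i + (n - l) + l])"
  then have t: "t < l" by simp
  then have "map u [i + (n - l)..<i + (n - l) + l] ! t = u (i + (n - 1 - (l - 1 - t)))"
    using assms(1) by (simp add: algebra_simps)
  also have "\<dots> = u (i + (l - 1 - t))" using assms(2)[of "l - 1 - t"] t by simp
  also have "\<dots> = rev (map u [i..<i + l]) ! t" using t by (simp add: rev_nth)
  finally show "map u [i + (n - l)..<i + (n - l) + l] ! t = rev (map u [i..<i + l]) ! t" .
qed simp

text \<open>If the edge window at \<open>d\<close> were the reversal of the first one, the vertex window at \<open>d + 1\<close>
  would be the reversal of the first vertex window; for the last edge this is excluded by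
  \<open>u (i + k - 1) \<noteq> u (i + l)\<close> instead.\<close>

lemma rev_class_edge_window_ne:
  assumes ne: "\<And>t. 0 < t \<Longrightarrow> t < k \<Longrightarrow> rev_class (map u [i + t..<i + t + l]) \<noteq> rev_class (map u [i..<i + l])"
    and last: "u (i + (k - 1)) \<noteq> u (i + l)" and d: "0 < d" "d < k"
  shows "rev_class (map u [i + d..<i + d + Suc l]) \<noteq> rev_class (map u [i..<i + Suc l])"
proof
  let ?e = "map u [i..<i + Suc l]"
  assume "rev_class (map u [i + d..<i + d + Suc l]) = rev_class ?e"
  then consider "map u [i + d..<i + d + Suc l] = ?e" | "map u [i + d..<i + d + Suc l] = rev ?e"
    by (auto simp: rev_class_eq_iff)
  then show False
  proof cases
    case 1
    then have "map u [i + d..<i + d + l] = map u [i..<i + l]"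
      using arg_cong[OF 1, of "take l"] by (simp add: take_map_upt)
    then show False using ne[OF d] by metis
  next
    case 2
    show False
    proof (cases "Suc d < k")
      case True
      have "drop 1 (rev ?e) = rev (map u [i..<i + l])" by (simp add: drop_rev take_map_upt)
      then have "map u [i + Suc d..<i + Suc d + l] = rev (map u [i..<i + l])"
        using arg_cong[OF 2, of "drop 1"] drop_map_upt[of 1 "Suc l" u "i + d"] by simp
      then show False using ne[of "Suc d"] True by (metis rev_class_rev zero_less_Suc)
    next
      case False
      then have "d = k - 1" using d by simp
      have "hd (map u [i + d..<i + d + Suc l]) = u (i + d)" by (simp add: upt_conv_Cons del: upt_Suc)
      moreover have "hd (rev ?e) = u (i + l)" by (simp add: hd_rev)
      ultimately have "u (i + d) = u (i + l)" using 2 by simp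
      then show False using last \<open>d = k - 1\<close> by simp
    qed
  qed
qed

text \<open>With \<open>l\<close> the first position at which \<open>r\<close> fails to be a palindrome, the windows of length
  \<open>l\<close> along \<open>r\<close> trace a closed walk whose closing edge is the first window of length \<open>l + 1\<close>.\<close>

lemma rauzy_cycle_of_nonpal_return_word:
  assumes P: "palindrome P" and r: "complete_return_word u P r" "\<not> palindrome r"
  shows "\<exists>l. rauzy_cycle u l"
proof -
  let ?p = "length P"
  obtain i j where ij: "i < j" "occurs_at u P i" "occurs_at u P j"
    and no_occ: "\<And>k. i < k \<Longrightarrow> k < j \<Longrightarrow> \<not> occurs_at u P k" and r_eq: "r = map u [i..<j + ?p]"
    using r(1) unfolding complete_return_word_def by blast
  define n where "n = length r"
  have r_nth: "r ! t = u (i + t)" if "t < n" for t using that by (simp add: n_def r_eq)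
  obtain l where l: "2 * l + 2 \<le> n" "r ! l \<noteq> r ! (n - 1 - l)"
    and mirror: "\<And>t. t < l \<Longrightarrow> r ! t = r ! (n - 1 - t)"
    using not_palindrome_first_mismatch[OF r(2)] unfolding n_def by blast
  have j: "j = i + n - ?p" using ij(1) by (simp add: n_def r_eq)
  have "r = P @ map u [i + ?p..<j + ?p]" "r = map u [i..<j] @ P"
    using ij(1-3) map_upt_append[of i "i + ?p" "j + ?p" u] map_upt_append[of i j "j + ?p" u]
    by (simp_all add: r_eq occurs_at_def)
  then have "prefix P r" "suffix P r" by (metis prefixI, metis suffixI)
  then have pl: "?p \<le> l"
    using palindrome_border_mirror[OF P, of r l] l(2) unfolding n_def by fastforce
  have ne: "rev_class (map u [i + t..<i + t + l]) \<noteq> rev_class (map u [i..<i + l])"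
    if "0 < t" "t < n - l" for t
  proof (rule rev_class_window_ne[OF P ij(2) pl that(1)])
    fix k assume k: "i < k" "k \<le> i + t + (l - ?p)"
    then have "k < j" using that(2) pl j by linarith
    then show "\<not> occurs_at u P k" using no_occ k(1) by blast
  qed
  have last: "u (i + (n - l - 1)) \<noteq> u (i + l)" using l r_nth by (simp add: algebra_simps)
  show ?thesis
  proof (intro exI rauzy_cycle_of_closed_walk)
    show "0 < n - l" using l(1) by simp
    show "rev_class (map u [Suc i..<Suc i + l]) \<noteq> rev_class (map u [i..<i + l])"
      using ne[of 1] l(1) by (simp del: upt_Suc)
    have "map u [i + (n - l)..<i + (n - l) + l] = rev (map u [i..<i + l])"
      using l(1) mirror r_nth by (intro map_upt_mirror) simp_all
    then show "rev_class (map u [i + (n - l)..<i + (n - l) + l]) = rev_class (map u [i..<i + l])"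
      by simp
  next
    fix t assume "i < t" "t < i + (n - l)"
    then obtain d where "t = i + d" "0 < d" "d < n - l" by (metis add_less_cancel_left less_imp_add_positive)
    then show "rev_class (map u [t..<t + Suc l]) \<noteq> rev_class (map u [i..<i + Suc l])"
      using rev_class_edge_window_ne[OF ne last] by simp
  qed
qed

section \<open>Cycles of the local graphs\<close>

lemma hd_middle_last: "length f = Suc (Suc m) \<Longrightarrow> f = hd f # take m (drop 1 f) @ [last f]"
  by (cases f; cases "tl f" rule: rev_cases) auto

lemma rauzy_adj_through_word:
  assumes clo: "closed_under_reversal u"
    and adj: "rauzy_adj_through u (length w) E (rev_class w) Z Z'"
  obtains x y where "is_factor u (x # w @ [y])" "rev_class (x # w @ [y]) \<noteq> E" "Z \<noteq> Z'"
    "{Z, Z'} = {rev_class (x # w), rev_class (w @ [y])}"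
proof -
  obtain f where f: "is_factor u f" "length f = Suc (Suc (length w))" "rev_class f \<noteq> E" "Z \<noteq> Z'"
    "rauzy_ends (Suc (length w)) (rev_class f) = {Z, Z'}" "rev_class (take (length w) (drop 1 f)) = rev_class w"
    using adj unfolding rauzy_adj_through_def by blast
  have fd: "f = hd f # take (length w) (drop 1 f) @ [last f]" using hd_middle_last[OF f(2)] .
  obtain x y where xy: "is_factor u (x # w @ [y])" "rev_class (x # w @ [y]) = rev_class f"
  proof (cases "take (length w) (drop 1 f) = w")
    case True
    then show ?thesis using that[of "hd f" "last f"] f(1) fd by simp
  next
    case False
    then have "rev f = last f # w @ [hd f]"
      using f(6) fd by (auto simp: rev_class_eq_iff)
    then show ?thesis using that[of "last f" "hd f"] is_factor_rev[OF clo f(1)] by (metis rev_class_rev)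
  qed
  moreover have "{Z, Z'} = {rev_class (x # w), rev_class (w @ [y])}"
    using f(5) xy(2) rauzy_ends_Cons_snoc[of w "length w" x y] by simp
  ultimately show ?thesis using that f(3,4) by simp
qed

lemma has_cycle_Gamma_of_local_cycle:
  assumes clo: "closed_under_reversal u" and np: "\<not> palindrome w"
    and e0: "is_factor u (x0 # w @ [y0])"
    and AB: "A \<noteq> B" "{A, B} = {rev_class (x0 # w), rev_class (w @ [y0])}"
    and path: "(rauzy_adj_through u (length w) (rev_class (x0 # w @ [y0])) (rev_class w))\<^sup>*\<^sup>* A B"
  shows "has_cycle (Gamma u w)"
proof -
  define g :: "'a \<times> int \<Rightarrow> 'a list set" where
    "g p = (if snd p = -1 then rev_class (fst p # w) else rev_class (w @ [fst p]))" for p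
  define V where "V = fst (Gamma u w)"
  define Ed where "Ed = snd (Gamma u w)"
  have V: "V = left_ext u w \<times> {-1} \<union> right_ext u w \<times> {1}" unfolding V_def Gamma_def by simp
  have edge: "{(x, -1), (y, 1)} \<in> Ed" if "is_factor u (x # w @ [y])" for x y
    using that unfolding Ed_def Gamma_def bi_ext_def by auto
  have E: "e \<subseteq> V" if e: "e \<in> Ed" for e
  proof -
    obtain x y where "e = {(x, -1), (y, 1)}" "is_factor u (x # w @ [y])"
      using e unfolding Ed_def Gamma_def bi_ext_def by auto
    moreover from this(2) have "is_factor u (x # w)" "is_factor u (w @ [y])"
      using is_factor_take[of u _ "Suc (length w)"] is_factor_drop[of u _ 1] by fastforce+
    ultimately show ?thesis unfolding V left_ext_def right_ext_def by auto
  qed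
  have inj: "inj_on g V"
    using rev_class_Cons_ne_snoc[OF np] unfolding V
    by (auto simp: inj_on_def g_def rev_class_Cons_eq_iff rev_class_snoc_eq_iff)
  have img: "g ` {(x, -1), (y, 1)} = {rev_class (x # w), rev_class (w @ [y])}" for x y
    by (auto simp: g_def)
  have S: "\<exists>e\<in>Ed. e \<noteq> {(x0, -1), (y0, 1)} \<and> g ` e = {Z, Z'}"
    if adj: "rauzy_adj_through u (length w) (rev_class (x0 # w @ [y0])) (rev_class w) Z Z'" for Z Z'
  proof -
    obtain x y where xy: "is_factor u (x # w @ [y])" "rev_class (x # w @ [y]) \<noteq> rev_class (x0 # w @ [y0])"
      "{Z, Z'} = {rev_class (x # w), rev_class (w @ [y])}"
      using rauzy_adj_through_word[OF clo adj] by metis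
    then have "{(x, -1), (y, 1::int)} \<noteq> {(x0, -1), (y0, 1)}" by (auto simp: doubleton_eq_iff)
    moreover have "g ` {(x, -1), (y, 1)} = {Z, Z'}" using img xy(3) by simp
    ultimately show ?thesis using edge[OF xy(1)] by (intro bexI[of _ "{(x, -1), (y, 1)}"] conjI)
  qed
  have e0_img: "g ` {(x0, -1), (y0, 1)} = {A, B}" unfolding img by (rule AB(2)[symmetric])
  have "has_cycle (V, Ed)" using inj E edge[OF e0] e0_img AB(1) S path by (rule has_cycle_lift)
  then show ?thesis unfolding V_def Ed_def by simp
qed

lemma has_cycle_Theta_of_local_cycle:
  assumes clo: "closed_under_reversal u" and pal: "palindrome w"
    and e0: "is_factor u (x0 # w @ [y0])"
    and AB: "A \<noteq> B" "{A, B} = {rev_class (x0 # w), rev_class (w @ [y0])}"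
    and path: "(rauzy_adj_through u (length w) (rev_class (x0 # w @ [y0])) (rev_class w))\<^sup>*\<^sup>* A B"
  shows "has_cycle (Theta u w)"
proof -
  define g where "g x = rev_class (x # w)" for x
  define V where "V = fst (Theta u w)"
  define Ed where "Ed = snd (Theta u w)"
  have edge: "{x, y} \<in> Ed" if "is_factor u (x # w @ [y])" "x \<noteq> y" for x y
    using that unfolding Ed_def Theta_def bi_ext_def by auto
  have E: "e \<subseteq> V" if e: "e \<in> Ed" for e
  proof -
    obtain x y where "e = {x, y}" "is_factor u (x # w @ [y])"
      using e unfolding Ed_def Theta_def bi_ext_def by auto
    moreover from this(2) have "is_factor u (x # w)" "is_factor u (w @ [y])"
      using is_factor_take[of u _ "Suc (length w)"] is_factor_drop[of u _ 1] by fastforce+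
    moreover from this(1) have "is_factor u (w @ [x])"
      using is_factor_rev[OF clo] pal unfolding palindrome_def by fastforce
    ultimately show ?thesis unfolding V_def Theta_def right_ext_def by auto
  qed
  have img: "g ` {x, y} = {rev_class (x # w), rev_class (w @ [y])}" for x y
    using rev_class_snoc_palindrome[OF pal] by (simp add: g_def)
  have "x0 \<noteq> y0" using AB img[of x0 y0] by auto
  have inj: "inj_on g V" by (simp add: inj_on_def g_def rev_class_Cons_eq_iff)
  have S: "\<exists>e\<in>Ed. e \<noteq> {x0, y0} \<and> g ` e = {Z, Z'}"
    if adj: "rauzy_adj_through u (length w) (rev_class (x0 # w @ [y0])) (rev_class w) Z Z'" for Z Z'
  proof -
    obtain x y where xy: "is_factor u (x # w @ [y])" "rev_class (x # w @ [y]) \<noteq> rev_class (x0 # w @ [y0])"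
      "Z \<noteq> Z'" "{Z, Z'} = {rev_class (x # w), rev_class (w @ [y])}"
      using rauzy_adj_through_word[OF clo adj] by metis
    then have "x \<noteq> y" using img[of x y] by auto
    moreover have "{x, y} \<noteq> {x0, y0}"
      using xy(2) pal by (auto simp: doubleton_eq_iff rev_class_eq_iff palindrome_def)
    moreover have "g ` {x, y} = {Z, Z'}" using img xy(4) by simp
    ultimately show ?thesis using edge[OF xy(1)] by (intro bexI[of _ "{x, y}"] conjI)
  qed
  have e0_img: "g ` {x0, y0} = {A, B}" unfolding img by (rule AB(2)[symmetric])
  have "has_cycle (V, Ed)"
    using inj E edge[OF e0 \<open>x0 \<noteq> y0\<close>] e0_img AB(1) S path by (rule has_cycle_lift)
  then show ?thesis unfolding V_def Ed_def by simp
qed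

lemma cycle_property_of_local_cycle:
  assumes clo: "closed_under_reversal u" and e0: "is_factor u e0" "length e0 = Suc (Suc m)"
    and AB: "A \<noteq> B" "rauzy_ends (Suc m) (rev_class e0) = {A, B}"
    and path: "(rauzy_adj_through u m (rev_class e0) (rev_class (take m (drop 1 e0))))\<^sup>*\<^sup>* A B"
  shows "cycle_property u (take m (drop 1 e0))"
proof -
  define w where "w = take m (drop 1 e0)"
  define x0 where "x0 = hd e0"
  define y0 where "y0 = last e0"
  have m: "m = length w" using e0(2) by (simp add: w_def)
  have e0_eq: "e0 = x0 # w @ [y0]" using hd_middle_last[OF e0(2)] unfolding w_def x0_def y0_def .
  have fac: "is_factor u (x0 # w @ [y0])" using e0(1) e0_eq by simp
  have ends: "{A, B} = {rev_class (x0 # w), rev_class (w @ [y0])}"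
    using AB(2) rauzy_ends_Cons_snoc[of w m x0 y0] m e0_eq by simp
  have path': "(rauzy_adj_through u (length w) (rev_class (x0 # w @ [y0])) (rev_class w))\<^sup>*\<^sup>* A B"
    using path[folded w_def] m e0_eq by simp
  have "is_factor u w" using e0(1) unfolding w_def by (intro is_factor_take is_factor_drop)
  then show ?thesis unfolding cycle_property_def w_def[symmetric]
    using has_cycle_Gamma_of_local_cycle[OF clo _ fac AB(1) ends path']
      has_cycle_Theta_of_local_cycle[OF clo _ fac AB(1) ends path'] by blast
qed

section \<open>Descent to lower orders\<close>

lemma rauzy_ends_middle:
  assumes "length f = Suc (Suc m)" "X \<in> rauzy_ends (Suc m) (rev_class f)"
  shows "rev_class (take m (drop 1 f)) \<in> rauzy_ends m X"
proof -
  have "X = rev_class (take (Suc m) f) \<or> X = rev_class (drop 1 f)"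
    using assms rauzy_ends_rev_class[OF assms(1)] by auto
  then show ?thesis
  proof
    assume X: "X = rev_class (take (Suc m) f)"
    have "rauzy_ends m X = {rev_class (take m (take (Suc m) f)), rev_class (drop 1 (take (Suc m) f))}"
      unfolding X using assms(1) by (intro rauzy_ends_rev_class) simp
    moreover have "drop 1 (take (Suc m) f) = take m (drop 1 f)" by (simp add: drop_take)
    ultimately show ?thesis by simp
  next
    assume X: "X = rev_class (drop 1 f)"
    have "rauzy_ends m X = {rev_class (take m (drop 1 f)), rev_class (drop 1 (drop 1 f))}"
      unfolding X using assms(1) by (intro rauzy_ends_rev_class) simp
    then show ?thesis by simp
  qed
qed

lemma rauzy_ends_factor:
  assumes "is_factor u f" "length f = Suc (Suc m)" "X \<in> rauzy_ends (Suc m) (rev_class f)"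
  obtains x where "X = rev_class x" "is_factor u x" "length x = Suc m"
proof -
  have "X = rev_class (take (Suc m) f) \<or> X = rev_class (drop 1 f)"
    using assms rauzy_ends_rev_class[OF assms(2)] by auto
  then show ?thesis
  proof
    assume "X = rev_class (take (Suc m) f)"
    then show ?thesis using that is_factor_take[OF assms(1)] assms(2) by simp
  next
    assume "X = rev_class (drop 1 f)"
    then show ?thesis using that is_factor_drop[OF assms(1)] assms(2) by simp
  qed
qed

lemma rauzy_reach_other_end:
  assumes "is_factor u z" "length z = Suc m" "rev_class z \<noteq> E"
    and "c \<in> rauzy_ends m (rev_class z)" "c' \<in> rauzy_ends m (rev_class z)"
    and "(rauzy_adj u m E)\<^sup>*\<^sup>* W c"
  shows "(rauzy_adj u m E)\<^sup>*\<^sup>* W c'"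
proof (cases "c = c'")
  case False
  have "rauzy_ends m (rev_class z) = {c, c'}"
    using assms(4,5) False rauzy_ends_rev_class[OF assms(2)] by auto
  then have "rauzy_adj u m E c c'" unfolding rauzy_adj_def using assms(1-3) False by blast
  then show ?thesis using assms(6) by (rule rtranclp.rtrancl_into_rtrancl[rotated])
qed (use assms in simp)

text \<open>A walk of order \<open>m + 1\<close> avoiding the vertex \<open>X\<close> is a sequence of edges of order \<open>m\<close>
  other than \<open>X\<close>, consecutive ones sharing an end.\<close>

lemma rauzy_reach_along_path:
  assumes "successively (rauzy_adj u (Suc m) E) ys" "ys \<noteq> []" "X \<notin> set ys"
    and "\<forall>c\<in>rauzy_ends m (hd ys). (rauzy_adj u m X)\<^sup>*\<^sup>* W c"
  shows "\<forall>c\<in>rauzy_ends m (last ys). (rauzy_adj u m X)\<^sup>*\<^sup>* W c"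
  using assms
proof (induction ys rule: induct_list012)
  case (3 Z Z' zs)
  obtain f where f: "is_factor u f" "length f = Suc (Suc m)" "rauzy_ends (Suc m) (rev_class f) = {Z, Z'}"
    using "3.prems"(1) unfolding rauzy_adj_def by auto
  let ?p = "rev_class (take m (drop 1 f))"
  have p: "?p \<in> rauzy_ends m Z" "?p \<in> rauzy_ends m Z'" using rauzy_ends_middle[OF f(2)] f(3) by auto
  obtain z' where z': "Z' = rev_class z'" "is_factor u z'" "length z' = Suc m"
    using rauzy_ends_factor[OF f(1,2)] f(3) by blast
  have "Z' \<noteq> X" using "3.prems"(3) by auto
  then have "\<forall>c\<in>rauzy_ends m Z'. (rauzy_adj u m X)\<^sup>*\<^sup>* W c"
    using rauzy_reach_other_end[OF z'(2,3)] z'(1) p "3.prems"(4) by auto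
  then show ?case using "3.IH" "3.prems" by simp
qed simp_all

lemma successively_first_failure:
  assumes "successively P xs" "\<not> successively Q xs"
  shows "\<exists>ys X Y zs. xs = ys @ X # Y # zs \<and> successively Q (ys @ [X]) \<and> P X Y \<and> \<not> Q X Y"
  using assms
proof (induction xs rule: induct_list012)
  case (3 a b rest)
  show ?case
  proof (cases "Q a b")
    case False
    then show ?thesis using "3.prems" by (intro exI[of _ "[]"]) auto
  next
    case True
    then have "\<not> successively Q (b # rest)" using "3.prems"(2) by simp
    moreover have "successively P (b # rest)" using "3.prems"(1) by simp
    ultimately obtain ys X Y zs where h: "b # rest = ys @ X # Y # zs" "successively Q (ys @ [X])"
      "P X Y" "\<not> Q X Y" using "3.IH" by blast
    have "hd (ys @ [X]) = b" using h(1) by (cases ys) auto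
    then have "successively Q (a # ys @ [X])" using h(2) True by (simp add: successively_Cons)
    then show ?thesis using h by (intro exI[of _ "a # ys"]) auto
  qed
qed simp_all

text \<open>If a walk of order \<open>m + 1\<close> leaves the edges through the middle class \<open>W\<close>, at the vertex \<open>X\<close>
  by an edge with middle class \<open>W\<^sub>1 \<noteq> W\<close>, then \<open>X\<close> is an edge of order \<open>m\<close> from \<open>W\<^sub>1\<close> to \<open>W\<close> and
  the rest of the walk reconnects its ends.\<close>

lemma rauzy_cycle_of_leaving_step:
  assumes step: "rauzy_adj u (Suc m) E X Y" "\<not> rauzy_adj_through u m E W X Y"
    and W: "W \<in> rauzy_ends m X"
    and walk: "successively (rauzy_adj u (Suc m) E) (Y # zs)" "X \<notin> set (Y # zs)"
    and closes: "W \<in> rauzy_ends m (last (Y # zs))"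
  shows "rauzy_cycle u m"
proof -
  obtain f where f: "is_factor u f" "length f = Suc (Suc m)" "rauzy_ends (Suc m) (rev_class f) = {X, Y}"
    and fE: "rev_class f \<noteq> E" "X \<noteq> Y"
    using step(1) unfolding rauzy_adj_def by blast
  define W1 where "W1 = rev_class (take m (drop 1 f))"
  have "W \<noteq> W1"
  proof
    assume "W = W1"
    then have "rauzy_adj_through u m E W X Y"
      unfolding rauzy_adj_through_def W1_def using f fE by (intro exI[of _ f]) simp
    then show False using step(2) by contradiction
  qed
  have W1: "W1 \<in> rauzy_ends m X" "W1 \<in> rauzy_ends m Y"
    using rauzy_ends_middle[OF f(2)] f(3) unfolding W1_def by auto
  obtain x where x: "X = rev_class x" "is_factor u x" "length x = Suc m"
    using rauzy_ends_factor[OF f(1,2)] f(3) by blast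
  obtain y where y: "Y = rev_class y" "is_factor u y" "length y = Suc m"
    using rauzy_ends_factor[OF f(1,2)] f(3) by blast
  have ends: "rauzy_ends m (rev_class x) = {W1, W}"
    using rauzy_ends_rev_class[OF x(3)] W W1(1) x(1) \<open>W \<noteq> W1\<close> by auto
  have "Y \<noteq> X" using walk(2) by auto
  then have "rev_class y \<noteq> X" using y(1) by simp
  then have "\<forall>c\<in>rauzy_ends m (hd (Y # zs)). (rauzy_adj u m X)\<^sup>*\<^sup>* W1 c"
    using rauzy_reach_other_end[OF y(2,3) _ W1(2)[unfolded y(1)] _ rtranclp.rtrancl_refl] y(1) by simp
  then have "(rauzy_adj u m (rev_class x))\<^sup>*\<^sup>* W1 W"
    using rauzy_reach_along_path[OF walk(1) _ walk(2)] closes x(1) by simp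
  then show ?thesis unfolding rauzy_cycle_def using x(2,3) ends \<open>W \<noteq> W1\<close> by blast
qed

lemma rauzy_cycle_Suc_cases:
  assumes clo: "closed_under_reversal u" and cyc: "rauzy_cycle u (Suc m)"
  shows "rauzy_cycle u m \<or> (\<exists>q. cycle_property u q)"
proof -
  obtain e0 A B where e0: "is_factor u e0" "length e0 = Suc (Suc m)"
    and AB: "A \<noteq> B" "rauzy_ends (Suc m) (rev_class e0) = {A, B}"
    and path: "(rauzy_adj u (Suc m) (rev_class e0))\<^sup>*\<^sup>* A B"
    using cyc unfolding rauzy_cycle_def by (elim exE conjE) blast
  define W where "W = rev_class (take m (drop 1 e0))"
  have W_AB: "W \<in> rauzy_ends m A" "W \<in> rauzy_ends m B"
    using rauzy_ends_middle[OF e0(2), of A] rauzy_ends_middle[OF e0(2), of B] AB(2)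
    unfolding W_def by simp_all
  obtain xs where xs: "xs \<noteq> []" "hd xs = A" "last xs = B" "distinct xs"
    "successively (rauzy_adj u (Suc m) (rev_class e0)) xs"
    using rtranclp_imp_distinct_path[OF path] by blast
  show ?thesis
  proof (cases "successively (rauzy_adj_through u m (rev_class e0) W) xs")
    case True
    then have "(rauzy_adj_through u m (rev_class e0) W)\<^sup>*\<^sup>* A B"
      using successively_imp_rtranclp[OF True xs(1)] xs(2,3) by simp
    then show ?thesis using cycle_property_of_local_cycle[OF clo e0 AB] unfolding W_def by blast
  next
    case False
    then obtain ys X Y zs where split: "xs = ys @ X # Y # zs"
      "successively (rauzy_adj_through u m (rev_class e0) W) (ys @ [X])"
      "rauzy_adj u (Suc m) (rev_class e0) X Y" "\<not> rauzy_adj_through u m (rev_class e0) W X Y"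
      using successively_first_failure[OF xs(5) False] by blast
    have "W \<in> rauzy_ends m X"
    proof (cases "ys = []")
      case True
      then show ?thesis using split(1) xs(2) W_AB by simp
    next
      case False
      then have "rauzy_adj_through u m (rev_class e0) W (last ys) X"
        using split(2) by (simp add: successively_append_iff)
      then obtain f' where "length f' = Suc (Suc m)"
        "rauzy_ends (Suc m) (rev_class f') = {last ys, X}" "rev_class (take m (drop 1 f')) = W"
        unfolding rauzy_adj_through_def by blast
      then show ?thesis using rauzy_ends_middle[of f' m X] by simp
    qed
    moreover have "successively (rauzy_adj u (Suc m) (rev_class e0)) (Y # zs)"
      using xs(5) split(1) by (simp add: successively_append_iff)
    moreover have "X \<notin> set (Y # zs)" using xs(4) split(1) by simp
    moreover have "W \<in> rauzy_ends m (last (Y # zs))" using split(1) xs(3) W_AB by simp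
    ultimately show ?thesis using rauzy_cycle_of_leaving_step[OF split(3,4)] by blast
  qed
qed

lemma rauzy_cycle_imp_cycle_property:
  assumes "closed_under_reversal u" "rauzy_cycle u m"
  shows "\<exists>q. cycle_property u q"
  using assms(2)
proof (induction m)
  case 0
  then show ?case using not_rauzy_cycle_0 by blast
next
  case (Suc m)
  then show ?case using rauzy_cycle_Suc_cases[OF assms(1)] by blast
qed

section \<open>Return words to letters\<close>

text \<open>The edges of \<open>\<Theta>(\<epsilon>)\<close> read within the prefix of length \<open>N\<close>.\<close>

definition letter_edges :: "(nat \<Rightarrow> 'a) \<Rightarrow> nat \<Rightarrow> 'a set set" where
  "letter_edges u N = {{u t, u (Suc t)} | t. Suc t < N \<and> u t \<noteq> u (Suc t)}"

lemma letter_edges_mono: "N \<le> M \<Longrightarrow> letter_edges u N \<subseteq> letter_edges u M"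
  unfolding letter_edges_def by fastforce

lemma letter_edges_Suc_Suc:
  "letter_edges u (Suc (Suc M)) = letter_edges u (Suc M) \<union> (if u M \<noteq> u (Suc M) then {{u M, u (Suc M)}} else {})"
  unfolding letter_edges_def by (auto simp: less_Suc_eq)

lemma letter_edges_le_1: "N \<le> 1 \<Longrightarrow> letter_edges u N = {}"
  unfolding letter_edges_def by auto

text \<open>A letter \<open>c\<close> read after \<open>a\<close> that occurred before: its complete return word from the previous
  occurrence is a palindrome ending with \<open>a c\<close>, hence starting with \<open>c a\<close>.\<close>

lemma letter_edge_repeated:
  assumes H: "\<forall>a r. complete_return_word u [a] r \<longrightarrow> palindrome r"
    and M: "u M \<noteq> u (Suc M)" and t: "t \<le> M" "u t = u (Suc M)"
  shows "{u M, u (Suc M)} \<in> letter_edges u (Suc M)"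
proof -
  let ?c = "u (Suc M)"
  define T where "T = Max {t. t \<le> M \<and> u t = ?c}"
  have fin: "finite {t. t \<le> M \<and> u t = ?c}" by simp
  have "{t. t \<le> M \<and> u t = ?c} \<noteq> {}" using t by auto
  then have "T \<in> {t. t \<le> M \<and> u t = ?c}" unfolding T_def using fin by (rule Max_in[rotated])
  then have T: "T \<le> M" "u T = ?c" by simp_all
  have Tmax: "k \<le> T" if "k \<le> M" "u k = ?c" for k unfolding T_def using fin that by auto
  have TM: "T < M" using T M by (metis le_neq_implies_less)
  define r where "r = map u [T..<Suc M + length [?c]]"
  have "complete_return_word u [?c] r"
    unfolding complete_return_word_def r_def
    by (rule exI[of _ T], rule exI[of _ "Suc M"]) (use T TM Tmax in \<open>auto simp: occurs_at_def less_Suc_eq_le, meson leD\<close>)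
  then have "palindrome r" using H by blast
  have len: "length r = M - T + 2" using TM by (simp add: r_def)
  have "u (Suc T) = r ! 1" using TM by (simp add: r_def del: upt_Suc)
  also have "\<dots> = rev r ! 1" using \<open>palindrome r\<close> by (simp add: palindrome_def)
  also have "\<dots> = r ! (M - T)" using len by (simp add: rev_nth)
  also have "\<dots> = u M" using TM by (simp add: r_def del: upt_Suc)
  finally have "u (Suc T) = u M" .
  then show ?thesis unfolding letter_edges_def using TM T M by (auto intro!: exI[of _ T] simp: insert_commute)
qed

lemma letter_edges_acyclic:
  assumes H: "\<forall>a r. complete_return_word u [a] r \<longrightarrow> palindrome r"
  shows "\<not> has_cycle (V, letter_edges u N)"
proof (induction N rule: less_induct)
  case (less N)
  show ?case
  proof (cases "N \<le> 1")
    case True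
    then show ?thesis by (simp add: letter_edges_le_1 not_has_cycle_no_edges)
  next
    case False
    then obtain M where N: "N = Suc (Suc M)" by (cases N; cases "N - 1") auto
    then have IH: "\<not> has_cycle (V, letter_edges u (Suc M))" using less by simp
    consider "u M = u (Suc M)" | "u M \<noteq> u (Suc M)" "\<exists>t \<le> M. u t = u (Suc M)"
      | "u M \<noteq> u (Suc M)" "\<forall>t \<le> M. u t \<noteq> u (Suc M)" by blast
    then show ?thesis
    proof cases
      case 1
      then show ?thesis using IH letter_edges_Suc_Suc[of u M] N by simp
    next
      case 2
      then have "{u M, u (Suc M)} \<in> letter_edges u (Suc M)" using letter_edge_repeated[OF H] by blast
      then have "letter_edges u N = letter_edges u (Suc M)" using letter_edges_Suc_Suc[of u M] N by auto
      then show ?thesis using IH by simp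
    next
      case 3
      then have "u (Suc M) \<notin> \<Union>(letter_edges u (Suc M))"
        unfolding letter_edges_def by (auto simp: less_Suc_eq_le dest: Suc_leD)
      moreover have "letter_edges u N = insert {u M, u (Suc M)} (letter_edges u (Suc M))"
        using letter_edges_Suc_Suc[of u M] N 3(1) by simp
      ultimately show ?thesis using has_cycle_insert_leaf IH 3(1) by metis
    qed
  qed
qed

lemma finite_subset_letter_edges:
  assumes "finite F" "\<forall>e\<in>F. \<exists>N. e \<in> letter_edges u N"
  shows "\<exists>N. F \<subseteq> letter_edges u N"
  using assms
proof (induction F rule: finite_induct)
  case (insert e F)
  then obtain N1 N2 where "F \<subseteq> letter_edges u N1" "e \<in> letter_edges u N2" by auto
  then show ?case using letter_edges_mono[of N1 "max N1 N2" u] letter_edges_mono[of N2 "max N1 N2" u]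
    by (intro exI[of _ "max N1 N2"]) auto
qed simp

text \<open>A cycle of \<open>\<Theta>(\<epsilon>)\<close> uses finitely many transitions between letters, all of which
  occur in some prefix of \<open>u\<close>.\<close>

lemma nonpal_letter_return_word_of_Theta_Nil:
  assumes "has_cycle (Theta u [])"
  shows "\<exists>a r. complete_return_word u [a] r \<and> \<not> palindrome r"
proof (rule ccontr)
  assume "\<not> ?thesis"
  then have H: "\<forall>a r. complete_return_word u [a] r \<longrightarrow> palindrome r" by blast
  obtain vs where vs: "length vs \<ge> 3" "distinct vs"
    "\<forall>i < length vs. {vs ! i, vs ! ((i + 1) mod length vs)} \<in> snd (Theta u [])"
    using assms unfolding has_cycle_def by auto
  let ?F = "(\<lambda>i. {vs ! i, vs ! ((i + 1) mod length vs)}) ` {..<length vs}"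
  have "\<exists>N. e \<in> letter_edges u N" if e: "e \<in> ?F" for e
  proof -
    obtain a b t where "e = {a, b}" "a \<noteq> b" "u t = a" "u (Suc t) = b"
      using e vs(3) unfolding Theta_def bi_ext_def is_factor_def occurs_at_def by (auto simp: upt_rec)
    then show ?thesis unfolding letter_edges_def by (intro exI[of _ "Suc (Suc t)"]) auto
  qed
  then obtain N where "?F \<subseteq> letter_edges u N" using finite_subset_letter_edges[of ?F u] by auto
  then have "has_cycle (UNIV, letter_edges u N)" unfolding has_cycle_def using vs by (intro exI[of _ vs]) auto
  then show False using letter_edges_acyclic[OF H] by blast
qed

theorem theorem26:
  fixes u :: "nat \<Rightarrow> 'a::finite"
  assumes "closed_under_reversal u"
    and "pal_defect u > 0"
  shows "(\<exists>q. cycle_property u q)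
         \<and> ({q. cycle_property u q} = {[]} \<longrightarrow>
              (\<exists>a r. complete_return_word u [a] r \<and> \<not> palindrome r))"
proof
  obtain P r where "palindrome P" "complete_return_word u P r" "\<not> palindrome r"
    using pal_defect_pos_imp_nonpal_return_word[OF assms(2)] .
  then obtain l where "rauzy_cycle u l" using rauzy_cycle_of_nonpal_return_word by blast
  then show "\<exists>q. cycle_property u q" using rauzy_cycle_imp_cycle_property[OF assms(1)] by blast
next
  show "{q. cycle_property u q} = {[]} \<longrightarrow> (\<exists>a r. complete_return_word u [a] r \<and> \<not> palindrome r)"
  proof
    assume "{q. cycle_property u q} = {[]}"
    then have "has_cycle (Theta u [])" unfolding cycle_property_def palindrome_def by auto
    then show "\<exists>a r. complete_return_word u [a] r \<and> \<not> palindrome r"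
      by (rule nonpal_letter_return_word_of_Theta_Nil)
  qed
qed

end
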